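(* For every real $p\ge 0$ and every real $x>0$, $$\big[\tilde\psi^{(p)}(x)\big]^2=2^{2p}\int_0^\infty dy\,y^{2p+1}e^{-2xy}\int_0^1du\,u^p(1-u)^p\Big\{-1+2\Big(\coth y-\frac1y\Big)\Big(\coth yu-\frac{1}{yu}\Big)-\frac{2}{y(1-u)}\Big[u\Big(\coth yu-\frac1{yu}\Big)-\Big(\coth y-\frac1y\Big)\Big]\Big\}.$$
   Context: For real $p\ge0$ and $x>0$, $\tilde\psi^{(p)}(x):=-(-2)^p\int_0^\infty ds\,e^{-2xs}\,s^p\big(\coth s-\frac1s\big)$ (for integer $p$ this is the $p$-th derivative of $\tilde\psi(x)=\psi(x)-\ln x+\frac1{2x}$, $\psi$ the digamma function). Here $(-2)^p$ is only relevant through its square $2^{2p}$; for non-integer $p$ one may read $(-2)^p$ as any fixed choice with $((-2)^p)^2=2^{2p}$. *)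

theory Defs
  imports "HOL-Analysis.Analysis"
begin

definition coth :: "real \<Rightarrow> real" where
  "coth s = cosh s / sinh s"

text \<open>Sign convention for the factor (-2)^p: for integer p it is (-2)^p, otherwise 2 powr p.
  Only its square 2^(2p) matters.\<close>
definition neg2pow :: "real \<Rightarrow> real" where
  "neg2pow p = (if p \<in> \<nat> then (-2) ^ nat \<lfloor>p\<rfloor> else 2 powr p)"

definition psi_tilde :: "real \<Rightarrow> real \<Rightarrow> real" where
  "psi_tilde p x = - neg2pow p *
     (set_lebesgue_integral lborel {0<..} (\<lambda>s. exp (-2*x* s) * s powr p * (coth s - 1/s)))"

end

theory Submission
  imports Defs
begin

text \<open>
  The Langevin function \<open>L s = coth s - 1/s\<close> takes values in \<open>[0, 1]\<close> for \<open>s > 0\<close>, so the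
  integrand \<open>g s = exp (-2 x s) s^p L s\<close> of \<open>psi_tilde p x\<close> is nonnegative and the square of its
  integral is the integral of \<open>g s g t\<close> over the quadrant. The substitution \<open>s = y u\<close>,
  \<open>t = y (1 - u)\<close> turns this into the integral of
  \<open>y g (y u) g (y (1 - u)) = y^(2p+1) exp (-2 x y) u^p (1 - u)^p L (y u) L (y (1 - u))\<close>.
  The kernel in braces is not symmetric under \<open>u \<mapsto> 1 - u\<close>, but by the addition formula
  \<open>coth (a + b) (coth a + coth b) = coth a coth b + 1\<close> its symmetrisation is
  \<open>2 L (y u) L (y (1 - u))\<close>; since the weight \<open>u^p (1 - u)^p\<close> is symmetric, the two inner
  integrals agree. The kernel is integrable, being bounded by \<open>3 + 2/y\<close> because \<open>t coth t\<close>
  is 1-Lipschitz.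
\<close>

definition langevin :: "real \<Rightarrow> real" where
  "langevin s = coth s - 1 / s"

lemma sinh_le_mult_cosh:
  assumes "(0::real) \<le> s" shows "sinh s \<le> s * cosh s"
proof -
  have "(\<lambda>t. t * cosh t - sinh t) 0 \<le> (\<lambda>t. t * cosh t - sinh t) s"
    by (rule DERIV_nonneg_imp_nondecreasing[OF assms])
       (auto intro!: exI derivative_eq_intros simp: algebra_simps)
  then show ?thesis by simp
qed

lemma langevin_nonneg:
  assumes "0 < s" shows "0 \<le> langevin s"
  using sinh_le_mult_cosh[of s] assms sinh_real_pos_iff[of s]
  by (simp add: langevin_def coth_def field_simps)

lemma langevin_le_one:
  assumes "0 < s" shows "langevin s \<le> 1"
proof -
  have "2 * s \<le> exp (2 * s) - 1"
    using exp_ge_add_one_self[of "2 * s"] by linarith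
  then have "exp (-s) * (2 * s) \<le> exp (-s) * (exp (2 * s) - 1)"
    by (intro mult_left_mono) auto
  also have "\<dots> = 2 * sinh s"
    by (simp add: sinh_field_def algebra_simps flip: exp_add)
  finally have "(cosh s - sinh s) * s \<le> sinh s"
    by (simp add: cosh_minus_sinh)
  then show ?thesis
    using assms sinh_real_pos_iff[of s] by (simp add: langevin_def coth_def field_simps)
qed

lemma has_real_derivative_coth:
  assumes "sinh s \<noteq> 0"
  shows "(coth has_real_derivative - 1 / (sinh s)\<^sup>2) (at s)"
proof -
  have "((\<lambda>t. cosh t / sinh t) has_real_derivative
          (sinh s * sinh s - cosh s * cosh s) / (sinh s * sinh s)) (at s)"
    by (auto intro!: derivative_eq_intros assms)
  moreover have "sinh s * sinh s - cosh s * cosh s = -1"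
    using hyperbolic_pythagoras[of s] by (simp add: power2_eq_square)
  ultimately show ?thesis
    by (simp add: coth_def[abs_def] power2_eq_square)
qed

lemma deriv_mult_coth_bounds:
  assumes "0 < z"
  shows "0 \<le> coth z - z / (sinh z)\<^sup>2" and "coth z - z / (sinh z)\<^sup>2 \<le> 1"
proof -
  have sinh_pos: "sinh z > 0" using assms by simp
  have eq: "coth z - z / (sinh z)\<^sup>2 = (sinh z * cosh z - z) / (sinh z)\<^sup>2"
    using sinh_pos by (simp add: coth_def field_simps power2_eq_square)
  have "2 * z \<le> sinh (2 * z)"
    using real_le_x_sinh[of "2 * z"] assms by (simp add: sinh_field_def exp_minus field_simps)
  then have lower: "z \<le> sinh z * cosh z" by (simp add: sinh_double)
  have "sinh z * cosh z - (sinh z)\<^sup>2 = sinh z * (cosh z - sinh z)"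
    by (simp add: power2_eq_square algebra_simps)
  also have "\<dots> = (exp z - exp (-z)) / 2 * exp (-z)"
    unfolding cosh_minus_sinh by (simp add: sinh_field_def)
  also have "\<dots> = (1 - exp (- (2 * z))) / 2"
    by (simp add: field_simps flip: exp_add)
  also have "\<dots> \<le> z" using exp_ge_add_one_self[of "- (2 * z)"] by simp
  finally have upper: "sinh z * cosh z - z \<le> (sinh z)\<^sup>2" by simp
  show "0 \<le> coth z - z / (sinh z)\<^sup>2" "coth z - z / (sinh z)\<^sup>2 \<le> 1"
    unfolding eq using lower upper sinh_pos by (auto simp: field_simps)
qed

lemma abs_mult_coth_diff_le:
  assumes "0 < a" "a \<le> b"
  shows "\<bar>b * coth b - a * coth a\<bar> \<le> b - a"
proof (cases "a = b")
  case False
  then have "a < b" using assms by simp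
  then obtain z where z: "a < z" "z < b"
    and mvt: "b * coth b - a * coth a = (b - a) * (coth z - z / (sinh z)\<^sup>2)"
    using MVT2[of a b "\<lambda>t. t * coth t" "\<lambda>t. coth t - t / (sinh t)\<^sup>2"] assms
    by (force intro!: derivative_eq_intros has_real_derivative_coth)
  show ?thesis
    using deriv_mult_coth_bounds[of z] z assms unfolding mvt
    by (simp add: abs_mult mult_le_cancel_left1)
qed simp

lemma coth_add_mult:
  assumes "sinh a \<noteq> 0" "sinh b \<noteq> 0" "sinh (a + b) \<noteq> 0"
  shows "coth (a + b) * (coth a + coth b) = coth a * coth b + 1"
proof -
  have "coth a + coth b = sinh (a + b) / (sinh a * sinh b)"
    using assms by (simp add: coth_def sinh_add field_simps)
  then have "coth (a + b) * (coth a + coth b) = cosh (a + b) / (sinh a * sinh b)"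
    using assms(3) by (simp add: coth_def)
  also have "\<dots> = coth a * coth b + 1"
    using assms by (simp add: coth_def cosh_add field_simps)
  finally show ?thesis .
qed

definition square_kernel :: "real \<Rightarrow> real \<Rightarrow> real" where
  "square_kernel y u = -1 + 2 * langevin y * langevin (y * u)
     - 2 / (y * (1 - u)) * (u * langevin (y * u) - langevin y)"

lemma square_kernel_add_reflect:
  assumes "0 < y" "0 < u" "u < 1"
  shows "square_kernel y u + square_kernel y (1 - u) = 2 * langevin (y * u) * langevin (y * (1 - u))"
proof -
  define a b where "a = y * u" and "b = y * (1 - u)"
  have pos: "0 < a" "0 < b" and y: "y = a + b"
    using assms by (auto simp: a_def b_def algebra_simps)
  have k1: "square_kernel y u = -1 + 2 * langevin y * langevin a - 2 / b * (a / y * langevin a - langevin y)"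
    and k2: "square_kernel y (1 - u) = -1 + 2 * langevin y * langevin b - 2 / a * (b / y * langevin b - langevin y)"
    using assms by (simp_all add: square_kernel_def a_def b_def)
  have "square_kernel y u + square_kernel y (1 - u) - 2 * langevin a * langevin b
      = 2 * (coth y * (coth a + coth b) - (coth a * coth b + 1))"
    using pos assms(1) unfolding k1 k2 langevin_def
    by (simp add: field_simps) (simp add: y algebra_simps)
  also have "\<dots> = 0"
    using pos by (simp add: y coth_add_mult)
  finally show ?thesis by (simp add: a_def b_def)
qed

lemma abs_square_kernel_le:
  assumes "0 < y" "0 < u" "u < 1"
  shows "\<bar>square_kernel y u\<bar> \<le> 3 + 2 / y"
proof -
  define a where "a = y * u"
  have a: "0 < a" "a \<le> y" using assms by (auto simp: a_def mult_left_le)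
  have "\<bar>u * langevin a - langevin y\<bar> = \<bar>a * coth a - y * coth y\<bar> / y"
    using assms by (simp add: a_def langevin_def abs_divide field_simps)
  also have "\<dots> \<le> y * (1 - u) / y"
    using abs_mult_coth_diff_le[OF a] assms
    by (intro divide_right_mono) (auto simp: a_def abs_minus_commute algebra_simps)
  also have "\<dots> = 1 - u" using assms by simp
  finally have "\<bar>u * langevin a - langevin y\<bar> \<le> 1 - u" .
  moreover have factor: "\<bar>2 / (y * (1 - u))\<bar> = 2 / (y * (1 - u))" using assms by simp
  ultimately have "\<bar>2 / (y * (1 - u)) * (u * langevin a - langevin y)\<bar> \<le> 2 / (y * (1 - u)) * (1 - u)"
    unfolding abs_mult factor using assms by (intro mult_left_mono) auto
  also have "\<dots> = 2 / y" using assms by (simp add: field_simps)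
  finally have "\<bar>2 / (y * (1 - u)) * (u * langevin a - langevin y)\<bar> \<le> 2 / y" .
  moreover have "\<bar>2 * langevin y * langevin a\<bar> \<le> 2"
    using langevin_nonneg langevin_le_one a assms
    by (simp add: abs_mult mult_le_one)
  ultimately show ?thesis
    unfolding square_kernel_def a_def[symmetric] by linarith
qed

lemma coth_measurable [measurable]: "coth \<in> borel_measurable borel"
  unfolding coth_def[abs_def] by (intro borel_measurable_divide borel_measurable_continuous_onI continuous_intros)

lemma langevin_measurable [measurable]: "langevin \<in> borel_measurable borel"
  unfolding langevin_def[abs_def] by measurable

lemma square_kernel_measurable [measurable]:
  "case_prod square_kernel \<in> borel_measurable (borel \<Otimes>\<^sub>M borel)"
  unfolding square_kernel_def[abs_def] by measurable

lemma set_integral_eq_enn2real_nn_integral: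
  fixes f :: "'a \<Rightarrow> real"
  assumes [measurable]: "A \<in> sets M" "f \<in> borel_measurable M" and nonneg: "\<And>x. x \<in> A \<Longrightarrow> 0 \<le> f x"
  shows "(LINT x:A|M. f x) = enn2real (\<integral>\<^sup>+x\<in>A. ennreal (f x) \<partial>M)"
proof -
  have "(\<integral>\<^sup>+x. ennreal (indicator A x *\<^sub>R f x) \<partial>M) = (\<integral>\<^sup>+x\<in>A. ennreal (f x) \<partial>M)"
    by (intro nn_integral_cong) (simp split: split_indicator)
  then show ?thesis
    unfolding set_lebesgue_integral_def
    by (subst integral_eq_nn_integral) (auto intro!: AE_I2 simp: nonneg indicator_def)
qed

lemma nn_set_integral_eq_set_integral_real:
  fixes f :: "'a \<Rightarrow> real"
  assumes "set_integrable M A f" and nonneg: "\<And>x. x \<in> A \<Longrightarrow> 0 \<le> f x"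
  shows "(\<integral>\<^sup>+x\<in>A. ennreal (f x) \<partial>M) = ennreal (LINT x:A|M. f x)"
proof -
  have "(\<integral>\<^sup>+x\<in>A. ennreal (f x) \<partial>M) = (\<integral>\<^sup>+x. ennreal (indicator A x *\<^sub>R f x) \<partial>M)"
    by (intro nn_integral_cong) (simp split: split_indicator)
  also have "\<dots> = ennreal (LINT x:A|M. f x)"
    using assms unfolding set_integrable_def set_lebesgue_integral_def
    by (intro nn_integral_eq_integral) (auto intro!: AE_I2 simp: indicator_def)
  finally show ?thesis .
qed

lemma
  fixes h :: "real \<Rightarrow> 'a::{banach, second_countable_topology}"
  shows set_integrable_unit_interval_reflect:
      "set_integrable lborel {0<..<1} h \<Longrightarrow> set_integrable lborel {0<..<1} (\<lambda>u. h (1 - u))"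
    and set_integral_unit_interval_reflect:
      "(LBINT u:{0<..<1}. h (1 - u)) = (LBINT u:{0<..<1}. h u)"
proof -
  define A where "A u = indicator {0<..<1} u *\<^sub>R h u" for u :: real
  have reflect: "(\<lambda>u. indicator {0<..<1} u *\<^sub>R h (1 - u)) = (\<lambda>u. A (1 + (-1) * u))"
    by (auto simp: A_def fun_eq_iff split: split_indicator)
  show "set_integrable lborel {0<..<1} h \<Longrightarrow> set_integrable lborel {0<..<1} (\<lambda>u. h (1 - u))"
    unfolding set_integrable_def reflect A_def[symmetric]
    by (rule lborel_integrable_real_affine) (auto simp: A_def[abs_def])
  show "(LBINT u:{0<..<1}. h (1 - u)) = (LBINT u:{0<..<1}. h u)"
    unfolding set_lebesgue_integral_def reflect A_def[symmetric]
    using lborel_integral_real_affine[of "-1" A 1] by simp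
qed

lemma nn_integral_half_line_square:
  fixes g :: "real \<Rightarrow> ennreal"
  assumes [measurable]: "g \<in> borel_measurable borel"
  shows "(\<integral>\<^sup>+s\<in>{0<..}. g s \<partial>lborel)\<^sup>2 =
    (\<integral>\<^sup>+y\<in>{0<..}. ennreal y * (\<integral>\<^sup>+u\<in>{0<..<1}. g (y * u) * g (y * (1 - u)) \<partial>lborel) \<partial>lborel)"
proof -
  define G where "G s = g s * indicator {0<..} s" for s
  have [measurable]: "G \<in> borel_measurable borel" unfolding G_def[abs_def] by measurable
  have convolution: "(\<integral>\<^sup>+s. G s * G (y - s) \<partial>lborel)
      = ennreal y * (\<integral>\<^sup>+u\<in>{0<..<1}. g (y * u) * g (y * (1 - u)) \<partial>lborel) * indicator {0<..} y" for y
  proof (cases "0 < y")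
    case True
    have "(\<integral>\<^sup>+s. G s * G (y - s) \<partial>lborel) = ennreal y * (\<integral>\<^sup>+u. G (y * u) * G (y - y * u) \<partial>lborel)"
      using nn_integral_real_affine[of "\<lambda>s. G s * G (y - s)" y 0] True by simp
    also have "(\<lambda>u. G (y * u) * G (y - y * u)) = (\<lambda>u. g (y * u) * g (y * (1 - u)) * indicator {0<..<1} u)"
      using True by (auto simp: G_def fun_eq_iff zero_less_mult_iff algebra_simps split: split_indicator)
    finally show ?thesis using True by simp
  next
    case False
    then have "(\<lambda>s. G s * G (y - s)) = (\<lambda>s. 0)"
      by (auto simp: G_def fun_eq_iff split: split_indicator)
    then show ?thesis using False by simp
  qed
  have "(\<integral>\<^sup>+s\<in>{0<..}. g s \<partial>lborel)\<^sup>2 = (\<integral>\<^sup>+s. (\<integral>\<^sup>+t. G s * G t \<partial>lborel) \<partial>lborel)"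
    by (simp add: G_def power2_eq_square nn_integral_cmult nn_integral_multc)
  also have "\<dots> = (\<integral>\<^sup>+s. (\<integral>\<^sup>+y. G s * G (y - s) \<partial>lborel) \<partial>lborel)"
  proof (rule nn_integral_cong)
    fix s :: real
    show "(\<integral>\<^sup>+t. G s * G t \<partial>lborel) = (\<integral>\<^sup>+y. G s * G (y - s) \<partial>lborel)"
      using nn_integral_real_affine[of "\<lambda>t. G s * G t" 1 "- s"] by simp
  qed
  also have "\<dots> = (\<integral>\<^sup>+y. (\<integral>\<^sup>+s. G s * G (y - s) \<partial>lborel) \<partial>lborel)"
    by (rule lborel_pair.Fubini'[symmetric]) measurable
  finally show ?thesis
    by (simp add: convolution mult.assoc)
qed

lemma neg2pow_square: "(neg2pow p)\<^sup>2 = 2 powr (2 * p)"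
proof (cases "p \<in> \<nat>")
  case True
  then obtain n where p: "p = real n" by (auto elim: Nats_cases)
  have "(neg2pow p)\<^sup>2 = ((-2) ^ n)\<^sup>2"
    using True by (simp add: neg2pow_def p)
  also have "\<dots> = 2 ^ (2 * n)"
    by (simp add: power_mult_distrib flip: power_mult)
  also have "\<dots> = 2 powr (2 * p)"
    using powr_realpow[of 2 "2 * n"] by (simp add: p)
  finally show ?thesis .
next
  case False
  then show ?thesis
    by (simp add: neg2pow_def power2_eq_square flip: powr_add)
qed

definition psi_integrand :: "real \<Rightarrow> real \<Rightarrow> real \<Rightarrow> real" where
  "psi_integrand p x s = exp (-2 * x * s) * s powr p * langevin s"

lemma psi_integrand_measurable [measurable]: "psi_integrand p x \<in> borel_measurable borel"
  unfolding psi_integrand_def[abs_def] by measurable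

lemma psi_integrand_nonneg: "0 < s \<Longrightarrow> 0 \<le> psi_integrand p x s"
  by (simp add: psi_integrand_def langevin_nonneg)

lemma psi_tilde_altdef: "psi_tilde p x = - neg2pow p * (LBINT s:{0<..}. psi_integrand p x s)"
  by (simp add: psi_tilde_def psi_integrand_def langevin_def)

lemma psi_integrand_convolution_factor:
  assumes "0 < y" "0 < u" "u < 1"
  shows "y * (psi_integrand p x (y * u) * psi_integrand p x (y * (1 - u)))
    = y powr (2 * p + 1) * exp (-2 * x * y) * (u powr p * (1 - u) powr p * (langevin (y * u) * langevin (y * (1 - u))))"
proof -
  have "y powr (2 * p) = y powr p * y powr p"
    by (metis mult_2 powr_add)
  then have y_powr: "y powr (2 * p + 1) = y powr p * y powr p * y"
    using assms by (simp add: powr_add)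
  have exp_split: "exp (-2 * x * y) = exp (-2 * x * (y * u)) * exp (-2 * x * (y * (1 - u)))"
    by (simp add: algebra_simps flip: exp_add)
  have "(y * u) powr p = y powr p * u powr p" "(y * (1 - u)) powr p = y powr p * (1 - u) powr p"
    using assms by (simp_all add: powr_mult)
  then show ?thesis
    unfolding psi_integrand_def y_powr exp_split by (simp only: mult_ac)
qed

lemma set_integral_weighted_square_kernel:
  assumes "0 \<le> p" "0 < y"
  shows "set_integrable lborel {0<..<1}
      (\<lambda>u. u powr p * (1 - u) powr p * (langevin (y * u) * langevin (y * (1 - u))))"
    and "(LBINT u:{0<..<1}. u powr p * (1 - u) powr p * square_kernel y u)
      = (LBINT u:{0<..<1}. u powr p * (1 - u) powr p * (langevin (y * u) * langevin (y * (1 - u))))"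
proof -
  define h where "h u = u powr p * (1 - u) powr p * square_kernel y u" for u
  have h: "set_integrable lborel {0<..<1} h"
    unfolding set_integrable_def
  proof (rule integrableI_bounded_set_indicator[where B = "3 + 2 / y"])
    show "h \<in> borel_measurable lborel" unfolding h_def[abs_def] by measurable
    show "AE u in lborel. u \<in> {0<..<1} \<longrightarrow> norm (h u) \<le> 3 + 2 / y"
    proof (intro AE_I2 impI)
      fix u :: real assume u: "u \<in> {0<..<1}"
      have "norm (h u) = u powr p * (1 - u) powr p * \<bar>square_kernel y u\<bar>"
        by (simp add: h_def abs_mult)
      also have "\<dots> \<le> (1 * 1) * (3 + 2 / y)"
        using u assms abs_square_kernel_le[of y u] by (intro mult_mono powr_le1) auto
      finally show "norm (h u) \<le> 3 + 2 / y" by simp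
    qed
  qed auto
  have symmetrized: "(h u + h (1 - u)) / 2 = u powr p * (1 - u) powr p * (langevin (y * u) * langevin (y * (1 - u)))"
    if "u \<in> {0<..<1}" for u
  proof -
    have "h u + h (1 - u) = u powr p * (1 - u) powr p * (square_kernel y u + square_kernel y (1 - u))"
      by (simp add: h_def algebra_simps)
    then show ?thesis
      using square_kernel_add_reflect[of y u] that assms by simp
  qed
  have "set_integrable lborel {0<..<1} (\<lambda>u. (h u + h (1 - u)) / 2)"
    using h set_integrable_unit_interval_reflect[OF h] by auto
  then show "set_integrable lborel {0<..<1}
      (\<lambda>u. u powr p * (1 - u) powr p * (langevin (y * u) * langevin (y * (1 - u))))"
    by (subst (asm) set_integrable_cong) (simp_all add: symmetrized)
  have "(LBINT u:{0<..<1}. h u) = (LBINT u:{0<..<1}. (h u + h (1 - u)) / 2)"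
    using h set_integrable_unit_interval_reflect[OF h] set_integral_unit_interval_reflect[of h]
    by (simp add: set_integral_add)
  also have "\<dots> = (LBINT u:{0<..<1}. u powr p * (1 - u) powr p * (langevin (y * u) * langevin (y * (1 - u))))"
    by (rule set_lebesgue_integral_cong) (simp_all add: symmetrized)
  finally show "(LBINT u:{0<..<1}. u powr p * (1 - u) powr p * square_kernel y u)
      = (LBINT u:{0<..<1}. u powr p * (1 - u) powr p * (langevin (y * u) * langevin (y * (1 - u))))"
    by (simp add: h_def)
qed

lemma set_integral_weighted_square_kernel_nonneg:
  assumes "0 \<le> p" "0 < y"
  shows "0 \<le> (LBINT u:{0<..<1}. u powr p * (1 - u) powr p * square_kernel y u)"
proof -
  have "0 \<le> (LBINT u:{0<..<1}. u powr p * (1 - u) powr p * (langevin (y * u) * langevin (y * (1 - u))))"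
    unfolding set_lebesgue_integral_def
    using assms by (simp add: langevin_nonneg split: split_indicator)
  then show ?thesis
    using set_integral_weighted_square_kernel(2)[OF assms] by simp
qed

lemma nn_integral_psi_integrand_convolution:
  assumes "0 \<le> p" "0 < y"
  shows "ennreal y * (\<integral>\<^sup>+u\<in>{0<..<1}. ennreal (psi_integrand p x (y * u)) * ennreal (psi_integrand p x (y * (1 - u))) \<partial>lborel)
    = ennreal (y powr (2 * p + 1) * exp (-2 * x * y) *
        (LBINT u:{0<..<1}. u powr p * (1 - u) powr p * square_kernel y u))"
proof -
  define C where "C = y powr (2 * p + 1) * exp (-2 * x * y)"
  define F where "F u = u powr p * (1 - u) powr p * (langevin (y * u) * langevin (y * (1 - u)))" for u
  have F_nonneg: "0 \<le> F u" if "u \<in> {0<..<1}" for u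
    using that assms by (simp add: F_def langevin_nonneg)
  have pointwise: "ennreal y * (ennreal (psi_integrand p x (y * u)) * ennreal (psi_integrand p x (y * (1 - u))))
      = ennreal C * ennreal (F u)" if "u \<in> {0<..<1}" for u
  proof -
    have "0 \<le> psi_integrand p x (y * u)" "0 \<le> psi_integrand p x (y * (1 - u))"
      using that assms by (simp_all add: psi_integrand_nonneg)
    then have "ennreal y * (ennreal (psi_integrand p x (y * u)) * ennreal (psi_integrand p x (y * (1 - u))))
        = ennreal (y * (psi_integrand p x (y * u) * psi_integrand p x (y * (1 - u))))"
      using assms by (simp add: ennreal_mult)
    also have "\<dots> = ennreal (C * F u)"
      using that assms psi_integrand_convolution_factor[of y u p x] by (simp add: C_def F_def)
    also have "\<dots> = ennreal C * ennreal (F u)"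
      using F_nonneg[OF that] by (intro ennreal_mult) (simp_all add: C_def)
    finally show ?thesis .
  qed
  have "ennreal y * (\<integral>\<^sup>+u\<in>{0<..<1}. ennreal (psi_integrand p x (y * u)) * ennreal (psi_integrand p x (y * (1 - u))) \<partial>lborel)
      = (\<integral>\<^sup>+u\<in>{0<..<1}. ennreal C * ennreal (F u) \<partial>lborel)"
    by (subst nn_integral_cmult[symmetric])
       (auto intro!: nn_integral_cong simp: pointwise[unfolded mult.assoc[symmetric]] mult.assoc[symmetric] split: split_indicator)
  also have "\<dots> = ennreal C * (\<integral>\<^sup>+u\<in>{0<..<1}. ennreal (F u) \<partial>lborel)"
    by (simp add: mult.assoc nn_integral_cmult F_def)
  also have "\<dots> = ennreal C * ennreal (LBINT u:{0<..<1}. F u)"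
    using set_integral_weighted_square_kernel(1)[OF assms]
    by (subst nn_set_integral_eq_set_integral_real) (simp_all add: F_nonneg flip: F_def)
  also have "\<dots> = ennreal (C * (LBINT u:{0<..<1}. F u))"
    unfolding set_lebesgue_integral_def
    by (intro ennreal_mult[symmetric] integral_nonneg) (simp_all add: C_def F_nonneg split: split_indicator)
  finally show ?thesis
    using set_integral_weighted_square_kernel(2)[OF assms] by (simp add: C_def F_def)
qed

theorem lemma4p1p2:
  fixes p x :: real
  assumes "p \<ge> 0" and "x > 0"
  shows "(psi_tilde p x)^2 =
    2 powr (2*p) *
    set_lebesgue_integral lborel {0<..} (\<lambda>y. y powr (2*p+1) * exp (-2 * x * y) *
      set_lebesgue_integral lborel {0<..<1} (\<lambda>u. u powr p * (1-u) powr p *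
        (-1 + 2 * (coth y - 1/y) * (coth (y*u) - 1/(y*u))
         - 2 / (y*(1-u)) * (u * (coth (y*u) - 1/(y*u)) - (coth y - 1/y)))))"
proof -
  define N where "N = (\<integral>\<^sup>+s\<in>{0<..}. ennreal (psi_integrand p x s) \<partial>lborel)"
  define F where "F y = y powr (2 * p + 1) * exp (-2 * x * y) *
    (LBINT u:{0<..<1}. u powr p * (1 - u) powr p * square_kernel y u)" for y
  have F_measurable [measurable]: "F \<in> borel_measurable borel"
    unfolding F_def[abs_def] set_lebesgue_integral_def by measurable
  have F_nonneg: "0 \<le> F y" if "0 < y" for y
    using that assms by (simp add: F_def set_integral_weighted_square_kernel_nonneg)
  have "enn2real (N\<^sup>2) = (enn2real N)\<^sup>2"
    by (simp add: power2_eq_square enn2real_mult)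
  then have "(psi_tilde p x)\<^sup>2 = 2 powr (2 * p) * enn2real (N\<^sup>2)"
    using set_integral_eq_enn2real_nn_integral[of "{0<..}" lborel "psi_integrand p x"]
    by (simp add: psi_tilde_altdef N_def psi_integrand_nonneg power_mult_distrib neg2pow_square)
  also have "N\<^sup>2 = (\<integral>\<^sup>+y\<in>{0<..}. ennreal y * (\<integral>\<^sup>+u\<in>{0<..<1}.
      ennreal (psi_integrand p x (y * u)) * ennreal (psi_integrand p x (y * (1 - u))) \<partial>lborel) \<partial>lborel)"
    unfolding N_def by (rule nn_integral_half_line_square) measurable
  also have "\<dots> = (\<integral>\<^sup>+y\<in>{0<..}. ennreal (F y) \<partial>lborel)"
    by (intro nn_integral_cong)
      (simp add: F_def nn_integral_psi_integrand_convolution assms split: split_indicator)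
  also have "enn2real \<dots> = (LBINT y:{0<..}. F y)"
    using F_measurable F_nonneg by (intro set_integral_eq_enn2real_nn_integral[symmetric]) auto
  finally show ?thesis
    by (simp only: F_def square_kernel_def langevin_def)
qed

end
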